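(* Let $a<b$ and let $f:[a,b]\rightarrow\mathbb{R}$ be a differentiable mapping in $(a,b)$ such that $f'\in L^1[a,b]$ and $\gamma\le f'(x)\le \Gamma$ for all $x\in [a,b]$, where $\gamma,\Gamma$ are real constants. Assume additionally that $f(a+b-x)=f(x)$ for all $x\in[a,b]$. Put $S=\frac{f(b)-f(a)}{b-a}$. Then for all $x\in[a,\frac{a+b}{2}]$, \[ \left|f(x)-\frac{1}{b-a}\int_{a}^{b}f(t)\,dt\right|\leq \left[\frac{b-a}{4}+\left|x-\frac{3a+b}{4}\right|\right] (S-\gamma) \] and \[ \left|f(x)-\frac{1}{b-a}\int_{a}^{b}f(t)\,dt\right|\leq \left[\frac{b-a}{4}+\left|x-\frac{3a+b}{4}\right|\right] (\Gamma-S). \] *)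

theory Defs
  imports "HOL-Analysis.Analysis"
begin

end

theory Submission
  imports Defs
begin

text \<open>
  Symmetry forces \<open>f a = f b\<close>, so the slope \<open>S\<close> vanishes, and it reflects the derivative bounds:
  \<open>f'\<close> is bounded by \<open>-\<gamma>\<close> as well as by \<open>\<Gamma>\<close> in absolute value, making \<open>f\<close> Lipschitz with
  constant \<open>min (-\<gamma>) \<Gamma>\<close>. Folding every \<open>t \<in> [a,b]\<close> onto the left half \<open>[a,(a+b)/2]\<close> does not
  change \<open>f t\<close> and moves it within distance \<open>(b-a)/4 + \<bar>x - (3a+b)/4\<bar>\<close> of \<open>x\<close>; averaging the
  resulting pointwise bound over \<open>[a,b]\<close> gives both inequalities.
\<close>

lemma diff_bounds_of_derivative_bounds:
  fixes f f' :: "real \<Rightarrow> real"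
  assumes "continuous_on {a..b} f"
    and "\<And>x. x \<in> {a<..<b} \<Longrightarrow> (f has_real_derivative f' x) (at x)"
    and "\<And>x. x \<in> {a<..<b} \<Longrightarrow> \<gamma> \<le> f' x \<and> f' x \<le> \<Gamma>"
    and "a \<le> u" "u \<le> v" "v \<le> b"
  shows "\<gamma> * (v - u) \<le> f v - f u \<and> f v - f u \<le> \<Gamma> * (v - u)"
proof (cases "u = v")
  case False
  then have "u < v" using \<open>u \<le> v\<close> by simp
  have "continuous_on {u..v} f"
    using assms(1) by (rule continuous_on_subset) (use assms in auto)
  moreover have "\<And>x. u < x \<Longrightarrow> x < v \<Longrightarrow> f differentiable (at x)"
    using assms(2,4,6) by (meson greaterThanLessThan_iff less_le_trans le_less_trans real_differentiable_def)
  ultimately obtain l z where z: "u < z" "z < v" "DERIV f z :> l" "f v - f u = (v - u) * l"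
    using MVT[OF \<open>u < v\<close>] by blast
  have "l = f' z" using DERIV_unique[OF z(3) assms(2)] z assms by auto
  moreover have "\<gamma> \<le> f' z \<and> f' z \<le> \<Gamma>" using assms(3) z assms by auto
  ultimately show ?thesis using z(4) \<open>u < v\<close> by (simp add: mult.commute mult_right_mono)
qed simp

lemma symmetric_lipschitz_of_derivative_bounds:
  fixes f f' :: "real \<Rightarrow> real"
  assumes "a < b"
    and "continuous_on {a..b} f"
    and "\<And>x. x \<in> {a<..<b} \<Longrightarrow> (f has_real_derivative f' x) (at x)"
    and "\<And>x. x \<in> {a<..<b} \<Longrightarrow> \<gamma> \<le> f' x \<and> f' x \<le> \<Gamma>"
    and sym: "\<And>x. x \<in> {a..b} \<Longrightarrow> f (a + b - x) = f x"
  shows "(min (- \<gamma>) \<Gamma>)-lipschitz_on {a..b} f"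
proof (rule lipschitz_on_leI)
  note bounds = diff_bounds_of_derivative_bounds[OF assms(2-4)]
  have two_sided: "\<gamma> * (v - u) \<le> f v - f u \<and> f v - f u \<le> \<Gamma> * (v - u) \<and>
        \<gamma> * (v - u) \<le> f u - f v \<and> f u - f v \<le> \<Gamma> * (v - u)"
    if "a \<le> u" "u \<le> v" "v \<le> b" for u v
    using bounds[of u v] bounds[of "a + b - v" "a + b - u"] sym[of u] sym[of v] that by auto
  show "dist (f u) (f v) \<le> min (- \<gamma>) \<Gamma> * dist u v"
    if "u \<in> {a..b}" "v \<in> {a..b}" "u \<le> v" for u v
    using two_sided[of u v] that by (auto simp: dist_real_def min_def)
  have "\<gamma> * (b - a) \<le> 0" "0 \<le> \<Gamma> * (b - a)"
    using two_sided[of a b] \<open>a < b\<close> by auto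
  then show "0 \<le> min (- \<gamma>) \<Gamma>"
    using \<open>a < b\<close> by (simp add: mult_le_0_iff zero_le_mult_iff)
qed

lemma mean_deviation_le:
  fixes f :: "real \<Rightarrow> real"
  assumes "a < b" "f integrable_on {a..b}" "\<And>t. t \<in> {a..b} \<Longrightarrow> \<bar>y - f t\<bar> \<le> B"
  shows "\<bar>y - integral {a..b} f / (b - a)\<bar> \<le> B"
proof -
  have "((\<lambda>t. y - f t) has_integral ((b - a) * y - integral {a..b} f)) {a..b}"
    using has_integral_diff[OF has_integral_const_real[of y a b] integrable_integral[OF assms(2)]]
      \<open>a < b\<close> by simp
  moreover have "0 \<le> B"
    using assms(3)[of a] \<open>a < b\<close> abs_ge_zero[of "y - f a"] by fastforce
  moreover have "\<And>t. t \<in> {a..b} - {} \<Longrightarrow> norm (y - f t) \<le> B"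
    using assms(3) by simp
  ultimately have "norm ((b - a) * y - integral {a..b} f) \<le> B * (b - a)"
    using has_integral_bound_real[OF _ finite.emptyI] \<open>a < b\<close> by (metis content_real less_imp_le)
  then have "\<bar>(b - a) * y - integral {a..b} f\<bar> \<le> B * (b - a)"
    by simp
  moreover have "\<bar>y - integral {a..b} f / (b - a)\<bar> = \<bar>(b - a) * y - integral {a..b} f\<bar> / (b - a)"
    using \<open>a < b\<close> by (simp add: field_simps)
  ultimately show ?thesis using \<open>a < b\<close> by (simp add: pos_divide_le_eq)
qed

lemma left_half_dist_le:
  fixes a b x t :: real
  assumes "x \<in> {a..(a + b) / 2}" "t \<in> {a..(a + b) / 2}"
  shows "\<bar>x - t\<bar> \<le> (b - a) / 4 + \<bar>x - (3 * a + b) / 4\<bar>"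
  using assms by (auto simp: abs_if field_simps)

lemma symmetric_lipschitz_mean_deviation:
  fixes f :: "real \<Rightarrow> real"
  assumes "a < b"
    and "f integrable_on {a..b}"
    and "K-lipschitz_on {a..b} f"
    and sym: "\<And>x. x \<in> {a..b} \<Longrightarrow> f (a + b - x) = f x"
    and x: "x \<in> {a..(a + b) / 2}"
  shows "\<bar>f x - integral {a..b} f / (b - a)\<bar> \<le> ((b - a) / 4 + \<bar>x - (3 * a + b) / 4\<bar>) * K"
proof (rule mean_deviation_le[OF assms(1,2)])
  fix t assume t: "t \<in> {a..b}"
  define t' where "t' = min t (a + b - t)"
  have t': "t' \<in> {a..(a + b) / 2}" and "f t = f t'"
    using t sym[of t] by (auto simp: t'_def min_def)
  have "\<bar>f x - f t'\<bar> \<le> K * \<bar>x - t'\<bar>"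
    using lipschitz_onD[OF assms(3), of x t'] x t' by (auto simp: dist_real_def)
  also have "\<dots> \<le> K * ((b - a) / 4 + \<bar>x - (3 * a + b) / 4\<bar>)"
    using left_half_dist_le[OF x t'] lipschitz_on_nonneg[OF assms(3)] by (rule mult_left_mono)
  finally show "\<bar>f x - f t\<bar> \<le> ((b - a) / 4 + \<bar>x - (3 * a + b) / 4\<bar>) * K"
    using \<open>f t = f t'\<close> by (simp add: mult.commute)
qed

theorem corollary2p4:
  fixes f f' :: "real \<Rightarrow> real" and a b \<gamma> \<Gamma> :: real
  assumes "a < b"
    and "continuous_on {a..b} f"
    and "\<And>x. x \<in> {a<..<b} \<Longrightarrow> (f has_real_derivative f' x) (at x)"
    and "set_integrable lborel {a..b} f'"
    and "\<And>x. x \<in> {a<..<b} \<Longrightarrow> \<gamma> \<le> f' x \<and> f' x \<le> \<Gamma>"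
    and "\<And>x. x \<in> {a..b} \<Longrightarrow> f (a + b - x) = f x"
    and "x \<in> {a..(a + b) / 2}"
  shows "\<bar>f x - integral {a..b} f / (b - a)\<bar>
           \<le> ((b - a) / 4 + \<bar>x - (3 * a + b) / 4\<bar>) * ((f b - f a) / (b - a) - \<gamma>) \<and>
         \<bar>f x - integral {a..b} f / (b - a)\<bar>
           \<le> ((b - a) / 4 + \<bar>x - (3 * a + b) / 4\<bar>) * (\<Gamma> - (f b - f a) / (b - a))"
proof -
  have "f b = f a" using assms(6)[of a] \<open>a < b\<close> by simp
  have lip: "(min (- \<gamma>) \<Gamma>)-lipschitz_on {a..b} f"
    using symmetric_lipschitz_of_derivative_bounds assms by blast
  have "f integrable_on {a..b}"
    using assms(2) integrable_continuous_interval by blast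
  then have mean_bound: "\<bar>f x - integral {a..b} f / (b - a)\<bar> \<le> ((b - a) / 4 + \<bar>x - (3 * a + b) / 4\<bar>) * K"
    if "K-lipschitz_on {a..b} f" for K
    by (rule symmetric_lipschitz_mean_deviation[OF \<open>a < b\<close> _ that]) (use assms in auto)
  show ?thesis
    using mean_bound[OF lipschitz_on_le[OF lip, of "- \<gamma>"]]
      mean_bound[OF lipschitz_on_le[OF lip, of \<Gamma>]] \<open>f b = f a\<close>
    by simp
qed

end
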